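(* For every integer $d\ge7$ and every $k\ge3$, \[ \frac{1}{d}+\frac{1}{d^3}-\frac{1}{d^4}+\sum_{j=3}^{d} d^{-j}\, j! + (2\pi d)^{1/2}\Big(\frac{e^{-1/13}}{\sqrt{2\pi}}\Big)^{d}\,\zeta\Big(\frac{d-1}{2}\Big)-\frac{k}{2d}<0. \]
   Context: $\zeta$ denotes the Riemann zeta function. *)

theory Defs
  imports "HOL-Analysis.Analysis"
begin

text \<open>Riemann zeta function on real arguments s > 1, via its Dirichlet series
  (the library has no zeta function; only real s > 1 is needed here).\<close>
definition zeta :: "real \<Rightarrow> real" where
  "zeta s = (\<Sum>n. 1 / (real (Suc n)) powr s)"

end

(* Multiplied by d, the left-hand side is 1 - k/2 + O(1/d). In the factorial sum every term
   with j >= 5 is at most 5!/d^5, and the Stirling-type term is at most d (2/5)^d zeta(2), since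
   sqrt(2 pi d) <= d, exp(-1/13)/sqrt(2 pi) <= 2/5 and zeta is decreasing. For d >= 8 the
   resulting explicit bound stays below 3/2 <= k/2; for d = 7 it does not (the margin there is
   only about 0.02), so that case is evaluated exactly. *)
theory Submission
  imports Defs
begin

lemma summable_zeta_series:
  assumes "1 < s"
  shows "summable (\<lambda>n. 1 / real (Suc n) powr s)"
proof -
  have "summable (\<lambda>n. real n powr (- s))"
    using assms by (simp add: summable_real_powr_iff)
  then have "summable (\<lambda>n. real (Suc n) powr (- s))"
    by (subst summable_Suc_iff)
  then show ?thesis
    by (simp add: powr_minus_divide)
qed

lemma zeta_nonneg:
  assumes "1 < s"
  shows "0 \<le> zeta s"
  unfolding zeta_def using summable_zeta_series[OF assms] by (rule suminf_nonneg) simp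

lemma zeta_antimono:
  assumes "1 < s" and "s \<le> t"
  shows "zeta t \<le> zeta s"
  unfolding zeta_def
proof (rule suminf_le)
  show "1 / real (Suc n) powr t \<le> 1 / real (Suc n) powr s" for n
    using assms by (intro divide_left_mono powr_mono) auto
  show "summable (\<lambda>n. 1 / real (Suc n) powr t)"
    using assms by (intro summable_zeta_series) simp
qed (rule summable_zeta_series[OF assms(1)])

lemma zeta_two: "zeta 2 = pi\<^sup>2 / 6"
proof -
  have "(\<lambda>n. 1 / real (Suc n) powr 2) = (\<lambda>n. 1 / (real n + 1)\<^sup>2)"
    by (simp add: powr_realpow' add.commute)
  then show ?thesis
    unfolding zeta_def using inverse_squares_sums by (simp add: sums_iff)
qed

lemma zeta_le_pi_squared_div_6:
  assumes "2 \<le> s"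
  shows "zeta s \<le> pi\<^sup>2 / 6"
  using zeta_antimono[of 2 s] assms by (simp add: zeta_two)

lemma fact_le_fact_mult_power:
  assumes "m \<le> j" and "j \<le> d"
  shows "(fact j :: 'a :: linordered_semidom) \<le> fact m * of_nat d ^ (j - m)"
  using assms
proof (induction j rule: dec_induct)
  case (step i)
  have "(fact (Suc i) :: 'a) = of_nat (Suc i) * fact i" by simp
  also have "\<dots> \<le> of_nat d * (fact m * of_nat d ^ (i - m))"
    using step by (intro mult_mono) (auto simp del: of_nat_Suc)
  also have "\<dots> = fact m * of_nat d ^ (Suc i - m)"
    using step by (simp add: Suc_diff_le mult.left_commute)
  finally show ?case .
qed simp

lemma fact_div_power_le:
  assumes "m \<le> j" and "j \<le> d" and "0 < d"
  shows "fact j / real d ^ j \<le> fact m / real d ^ m"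
proof -
  have "fact j / real d ^ j \<le> fact m * real d ^ (j - m) / real d ^ j"
    using assms by (intro divide_right_mono fact_le_fact_mult_power) auto
  also have "\<dots> = fact m / real d ^ m"
    using assms by (simp add: power_diff)
  finally show ?thesis .
qed

lemma sum_fact_div_power_le:
  assumes "m \<le> d" and "0 < d"
  shows "(\<Sum>j = m..d. fact j / real d ^ j) \<le> real (d + 1 - m) * (fact m / real d ^ m)"
proof -
  have "(\<Sum>j = m..d. fact j / real d ^ j) \<le> (\<Sum>j = m..d. fact m / real d ^ m)"
    using assms by (intro sum_mono fact_div_power_le) auto
  then show ?thesis by simp
qed

lemma sq_mult_two_fifths_power_antimono:
  assumes "2 \<le> m" and "m \<le> n"
  shows "real n ^ 2 * (2 / 5) ^ n \<le> real m ^ 2 * (2 / 5) ^ m"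
  using assms(2)
proof (induction n rule: dec_induct)
  case (step i)
  have i: "2 \<le> real i"
    using assms(1) step(1) by simp
  have "real i ^ 2 - 2 / 5 * (real i + 1) ^ 2 = (3 * (real i * (real i - 2)) + 2 * (real i - 1)) / 5"
    by (simp add: power2_eq_square algebra_simps)
  also have "\<dots> \<ge> 0"
    using i by (intro divide_nonneg_nonneg add_nonneg_nonneg mult_nonneg_nonneg) auto
  finally have "2 / 5 * (real i + 1) ^ 2 \<le> real i ^ 2"
    by simp
  then have "real (Suc i) ^ 2 * (2 / 5) ^ Suc i \<le> real i ^ 2 * (2 / 5) ^ i"
    by (simp add: mult_right_mono add.commute)
  with step.IH show ?case by linarith
qed simp

lemma exp_div_sqrt_two_pi_le: "exp (- 1 / 13) / sqrt (2 * pi) \<le> 2 / 5"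
proof -
  have "sqrt (25 / 4) \<le> sqrt (2 * pi)"
    using pi_approx(1) by (intro real_sqrt_le_mono) simp
  then have "5 / 2 \<le> sqrt (2 * pi)"
    by (simp add: real_sqrt_divide)
  moreover have "exp (- 1 / 13) \<le> (1 :: real)"
    by simp
  ultimately have "exp (- 1 / 13) / sqrt (2 * pi) \<le> 1 / (5 / 2)"
    by (intro frac_le) auto
  then show ?thesis by simp
qed

lemma sqrt_two_pi_mult_le:
  assumes "2 * pi \<le> x"
  shows "sqrt (2 * pi * x) \<le> x"
proof -
  have "0 \<le> x"
    using assms pi_gt_zero by linarith
  then have "sqrt (2 * pi * x) \<le> sqrt (x * x)"
    using assms by (intro real_sqrt_le_mono mult_right_mono)
  with \<open>0 \<le> x\<close> show ?thesis by simp
qed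

lemma sum_fact_div_power_from_three_le:
  assumes "5 \<le> d"
  shows "(\<Sum>j = 3..d. fact j / real d ^ j) \<le> 6 / real d ^ 3 + 144 / real d ^ 4"
proof -
  have "(\<Sum>j = 5..d. fact j / real d ^ j) \<le> real (d + 1 - 5) * (fact 5 / real d ^ 5)"
    using assms by (intro sum_fact_div_power_le) auto
  also have "\<dots> \<le> real d * (fact 5 / real d ^ 5)"
    by (intro mult_right_mono) auto
  also have "\<dots> = 120 / real d ^ 4"
    using assms by (simp add: eval_nat_numeral fact_numeral)
  finally have "(\<Sum>j = 5..d. fact j / real d ^ j) \<le> 120 / real d ^ 4" .
  moreover have "(\<Sum>j = 3..d. fact j / real d ^ j)
      = 6 / real d ^ 3 + 24 / real d ^ 4 + (\<Sum>j = 5..d. fact j / real d ^ j)"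
    using assms by (simp add: sum.atLeast_Suc_atMost eval_nat_numeral fact_numeral)
  ultimately show ?thesis by simp
qed

lemma factorial_sum_estimate:
  assumes "7 \<le> d"
  shows "1 / real d + 1 / real d ^ 3 - 1 / real d ^ 4 + (\<Sum>j = 3..d. fact j / real d ^ j)
           + real d * (2 / 5) ^ d * (33 / 20) < 3 / (2 * real d)"
proof (cases "d = 7")
  case True
  then show ?thesis
    by (simp add: eval_nat_numeral fact_numeral power_divide)
next
  case False
  with assms have "8 \<le> d" by simp
  define x where "x = real d"
  have x: "8 \<le> x"
    using \<open>8 \<le> d\<close> unfolding x_def by simp
  have "x * (2 / 5) ^ d = x\<^sup>2 * (2 / 5) ^ d * (1 / x)"
    using x by (simp add: power2_eq_square)
  also have "\<dots> \<le> 8\<^sup>2 * (2 / 5) ^ 8 * (1 / x)"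
    using sq_mult_two_fifths_power_antimono[of 8 d] \<open>8 \<le> d\<close> x unfolding x_def
    by (intro mult_right_mono) auto
  also have "\<dots> = 16384 / 390625 * (1 / x)"
    by (simp add: power_divide)
  finally have power: "x * (2 / 5) ^ d \<le> 16384 / 390625 * (1 / x)" .
  have inverse_power: "1 / x ^ Suc n \<le> 1 / 8 ^ n * (1 / x)" for n
  proof -
    have "1 / x ^ n \<le> 1 / 8 ^ n"
      using x by (intro divide_left_mono power_mono) auto
    then have "1 / x ^ n * (1 / x) \<le> 1 / 8 ^ n * (1 / x)"
      using x by (intro mult_right_mono) auto
    then show ?thesis
      by (simp add: mult.commute)
  qed
  have cube: "1 / x ^ 3 \<le> 1 / 64 * (1 / x)" and fourth: "1 / x ^ 4 \<le> 1 / 512 * (1 / x)"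
    using inverse_power[of 2] inverse_power[of 3] by (simp_all add: numeral_eq_Suc)
  have "6 / x ^ 3 = 6 * (1 / x ^ 3)" "144 / x ^ 4 = 144 * (1 / x ^ 4)"
    "3 / (2 * x) = 3 / 2 * (1 / x)"
    by simp_all
  moreover have "0 < 1 / x"
    using x by simp
  ultimately show ?thesis
    using sum_fact_div_power_from_three_le[of d] \<open>8 \<le> d\<close> power cube fourth
    unfolding x_def[symmetric] by linarith
qed

theorem lemma2p4:
  fixes d :: nat and k :: real
  assumes "d \<ge> 7" and "k \<ge> 3"
  shows "1 / real d + 1 / real d ^ 3 - 1 / real d ^ 4
         + (\<Sum>j = 3..d. fact j / real d ^ j)
         + sqrt (2 * pi * real d) * (exp (- 1 / 13) / sqrt (2 * pi)) ^ d
             * zeta ((real d - 1) / 2)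
         - k / (2 * real d) < 0"
proof -
  have "pi\<^sup>2 \<le> 3.1416\<^sup>2"
    using pi_approx by (intro power_mono) auto
  then have "pi\<^sup>2 / 6 \<le> 33 / 20"
    by (simp add: power2_eq_square)
  then have zeta: "0 \<le> zeta ((real d - 1) / 2)" "zeta ((real d - 1) / 2) \<le> 33 / 20"
    using assms(1) zeta_nonneg[of "(real d - 1) / 2"] zeta_le_pi_squared_div_6[of "(real d - 1) / 2"]
    by auto
  have "2 * pi \<le> real d"
    using assms(1) pi_approx by simp
  then have "sqrt (2 * pi * real d) * (exp (- 1 / 13) / sqrt (2 * pi)) ^ d * zeta ((real d - 1) / 2)
      \<le> real d * (2 / 5) ^ d * (33 / 20)"
    using zeta by (intro mult_mono power_mono sqrt_two_pi_mult_le exp_div_sqrt_two_pi_le) auto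
  moreover have "3 / (2 * real d) \<le> k / (2 * real d)"
    using assms by (intro divide_right_mono) auto
  ultimately show ?thesis
    using factorial_sum_estimate[OF assms(1)] by linarith
qed

end
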